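(* Let $A=(a,\ ha+d,\ ha+3d,\ ha+5d,\ \dots,\ ha+(2k+1)d)$ where $\gcd(a,d)=1$, $a,h,d,k\in\mathbb{P}$, $a>2$, $d>h$, $1\le 2k+1\le a-1$. Write $a-1=(2k+1)s+t$ with $1\le t\le 2k+1$. Then \begin{align*} \sum_{r=0}^{a-1}x^{N_r}&=1+\frac{x^{ha+d}\big(1-x^{(ha+(2k+1)d)s}\big)\big(1-x^{2d(k+1)}\big)}{(1-x^{ha+(2k+1)d})(1-x^{2d})}+\frac{x^{2ha+2d}\big(1-x^{(ha+(2k+1)d)s}\big)\big(1-x^{2dk}\big)}{(1-x^{ha+(2k+1)d})(1-x^{2d})}+f_1(x), \end{align*} where $$f_1(x)=\begin{cases}\dfrac{x^{ha(s+1)+d((2k+1)s+1)}\big(1-x^{d(t+1)}\big)}{1-x^{2d}}+\dfrac{x^{ha(s+2)+d((2k+1)s+2)}\big(1-x^{d(t-1)}\big)}{1-x^{2d}} & \text{if } t \text{ is odd},\\[8pt] \dfrac{x^{ha(s+1)+d((2k+1)s+1)}\big(1-x^{dt}\big)}{1-x^{2d}}+\dfrac{x^{ha(s+2)+d((2k+1)s+2)}\big(1-x^{dt}\big)}{1-x^{2d}} & \text{if } t \text{ is even}.\end{cases}$$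
   Context: For $A=(a,c_1,\dots,c_m)$ of positive integers with $\gcd(A)=1$ and $0\le r\le a-1$, $N_r$ is the least nonnegative integer $a_0\equiv r\pmod a$ that can be written as $\sum_{i=1}^m c_ix_i$ with all $x_i$ nonnegative integers. $\mathbb{P}=\{1,2,\dots\}$. *)

theory Defs
  imports Complex_Main
begin

definition representable :: "nat list \<Rightarrow> nat \<Rightarrow> bool" where
  "representable C n \<longleftrightarrow> (\<exists>xs. length xs = length C \<and> n = (\<Sum>i<length C. C ! i * xs ! i))"

definition Nr :: "nat \<Rightarrow> nat list \<Rightarrow> nat \<Rightarrow> nat" where
  "Nr a C r = (LEAST n. n mod a = r \<and> representable C n)"

end

theory Submission
  imports Defs "HOL-Number_Theory.Cong"
begin

text \<open>
  A sum of n generators c + (2i+1)d, where c = ha, equals nc + dm with m a sum of n odd numbers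
  from 1, 3, ..., 2k+1; the attainable pairs are exactly those with n \<le> m \<le> (2k+1)n and
  n \<equiv> m (mod 2). As gcd(a,d) = 1 and a divides c, the residue classes mod a are the classes
  of dm for m < a, and the cheapest element of the class of dm is nc + dm with the least
  admissible n for this very m: replacing m by m + a raises the cost by ad \<ge> c but saves
  at most one generator. Writing m = 1 + (2k+1)j + w with w \<le> 2k, that least
  n is j + 1 for even w and j + 2 for odd w, so the complete blocks j < s contribute a product
  of geometric series in x^(c+(2k+1)d) and x^(2d), and the last block (w < t) contributes f_1.
\<close>

lemma representable_map_iff:
  "representable (map f [0..<n]) N \<longleftrightarrow> (\<exists>g. N = (\<Sum>i<n. f i * g i))"
proof
  assume "representable (map f [0..<n]) N"
  then obtain xs where "length xs = n" "N = (\<Sum>i<n. map f [0..<n] ! i * xs ! i)"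
    unfolding representable_def by auto
  then show "\<exists>g. N = (\<Sum>i<n. f i * g i)" by auto
next
  assume "\<exists>g. N = (\<Sum>i<n. f i * g i)"
  then obtain g where "N = (\<Sum>i<n. f i * g i)" by blast
  then show "representable (map f [0..<n]) N"
    unfolding representable_def by (intro exI[of _ "map g [0..<n]"]) simp
qed

lemma sum_odd_progression:
  "(\<Sum>i<n. (c + (2*i+1)*d) * g i) = (\<Sum>i<n. g i) * c + d * (\<Sum>i<n. (2*i+1) * g i)"
  for c d :: nat
  by (simp add: sum.distrib sum_distrib_left sum_distrib_right algebra_simps)

lemma odd_parts_exist:
  fixes n m k :: nat
  assumes "n \<le> m" "m \<le> (2*k+1)*n" "even (n+m)"
  shows "\<exists>g. (\<Sum>i<k+1. g i) = n \<and> (\<Sum>i<k+1. (2*i+1) * g i) = m"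
  using assms
proof (induction n arbitrary: m)
  case 0
  then show ?case by (intro exI[of _ "\<lambda>_. 0"]) simp
next
  case (Suc n)
  define M where "M = (2*k+1)*n"
  have M: "even (M + n)" "n \<le> M" "m \<le> M + 2*k+1"
    using Suc.prems(2) unfolding M_def by simp_all
  obtain j where part: "j \<le> k" "2*j+1 \<le> m"
    and rest: "n \<le> m - (2*j+1)" "m - (2*j+1) \<le> M" "even (n + (m - (2*j+1)))"
  proof (cases "m - 1 \<le> M")
    case True
    then show ?thesis
      using that[of 0] Suc.prems by simp
  next
    case False
    then have "odd (m - M)"
      using Suc.prems(3) M(1) by presburger
    then obtain j where "m - M = 2*j+1"
      by (rule oddE)
    then have "m - (2*j+1) = M" "2*j+1 \<le> m" "j \<le> k"
      using False M(3) by linarith+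
    then show ?thesis
      using that[of j] M by simp
  qed
  obtain g where g: "(\<Sum>i<k+1. g i) = n" "(\<Sum>i<k+1. (2*i+1) * g i) = m - (2*j+1)"
    using Suc.IH rest unfolding M_def by blast
  let ?g = "\<lambda>i. g i + of_bool (i = j)"
  have "(\<Sum>i<k+1. ?g i) = Suc n" "(\<Sum>i<k+1. (2*i+1) * ?g i) = m"
    using g part by (simp_all add: sum.distrib distrib_left del: sum.lessThan_Suc)
  then show ?case by blast
qed

lemma representable_odd_progression_iff:
  "representable (map (\<lambda>i. c + (2*i+1)*d) [0..<k+1]) N \<longleftrightarrow>
    (\<exists>n m. N = n*c + d*m \<and> n \<le> m \<and> m \<le> (2*k+1)*n \<and> even (n+m))"
proof
  assume "representable (map (\<lambda>i. c + (2*i+1)*d) [0..<k+1]) N"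
  then obtain g where "N = (\<Sum>i<k+1. (c + (2*i+1)*d) * g i)"
    unfolding representable_map_iff by blast
  moreover define n m where "n = (\<Sum>i<k+1. g i)" and "m = (\<Sum>i<k+1. (2*i+1) * g i)"
  ultimately have "N = n*c + d*m"
    by (simp only: sum_odd_progression)
  moreover have "n \<le> m"
    unfolding n_def m_def by (intro sum_mono) simp
  moreover have "m \<le> (2*k+1)*n"
    unfolding n_def m_def sum_distrib_left by (intro sum_mono mult_le_mono1) simp
  moreover have "even (n + m)"
  proof -
    have "n + m = 2 * (\<Sum>i<k+1. (i+1) * g i)"
      unfolding n_def m_def sum.distrib[symmetric] sum_distrib_left by (rule sum.cong) simp_all
    then show ?thesis
      by (simp del: sum.lessThan_Suc)
  qed
  ultimately show "\<exists>n m. N = n*c + d*m \<and> n \<le> m \<and> m \<le> (2*k+1)*n \<and> even (n+m)"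
    by blast
next
  assume "\<exists>n m. N = n*c + d*m \<and> n \<le> m \<and> m \<le> (2*k+1)*n \<and> even (n+m)"
  then obtain n m where "N = n*c + d*m" "n \<le> m" "m \<le> (2*k+1)*n" "even (n+m)"
    by blast
  moreover obtain g where "(\<Sum>i<k+1. g i) = n" "(\<Sum>i<k+1. (2*i+1) * g i) = m"
    using odd_parts_exist \<open>n \<le> m\<close> \<open>m \<le> (2*k+1)*n\<close> \<open>even (n+m)\<close> by blast
  ultimately have "N = (\<Sum>i<k+1. (c + (2*i+1)*d) * g i)"
    by (simp only: sum_odd_progression)
  then show "representable (map (\<lambda>i. c + (2*i+1)*d) [0..<k+1]) N"
    unfolding representable_map_iff by blast
qed

text \<open>Closed form of the least n with n \<le> m \<le> (2k+1)n and n \<equiv> m (mod 2), i.e. of the fewest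
  odd parts of size at most 2k+1 summing to m.\<close>
definition min_odd_parts :: "nat \<Rightarrow> nat \<Rightarrow> nat" where
  "min_odd_parts k m =
    (if m = 0 then 0 else (m - 1) div (2*k+1) + 1 + (m - 1) mod (2*k+1) mod 2)"

lemma min_odd_parts_block:
  assumes "w < 2*k+1"
  shows "min_odd_parts k (Suc ((2*k+1)*j + w)) = j + 1 + w mod 2"
proof -
  define K where "K = 2*k+1"
  have "(K*j + w) div K = j" "(K*j + w) mod K = w"
    using assms unfolding K_def[symmetric] by simp_all
  then show ?thesis
    unfolding min_odd_parts_def K_def[symmetric] by simp
qed

lemma odd_block_cases:
  fixes k m :: nat
  obtains "m = 0" | j w where "w < 2*k+1" "m = Suc ((2*k+1)*j + w)"
proof (cases m)
  case (Suc m')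
  define K where "K = 2*k+1"
  have "m = Suc (K * (m' div K) + m' mod K)"
    using Suc by simp
  moreover have "m' mod K < K"
    unfolding K_def by simp
  ultimately show ?thesis
    using that(2) unfolding K_def by blast
qed (use that in blast)

lemma min_odd_parts_admissible:
  "min_odd_parts k m \<le> m \<and> m \<le> (2*k+1) * min_odd_parts k m \<and> even (min_odd_parts k m + m)"
proof (cases m rule: odd_block_cases[where k = k])
  case 1
  then show ?thesis by (simp add: min_odd_parts_def)
next
  case (2 j w)
  define K where "K = 2*k+1"
  have n: "min_odd_parts k m = j + 1 + w mod 2"
    using 2 min_odd_parts_block by simp
  have "j \<le> K*j" "w mod 2 \<le> w"
    unfolding K_def by simp_all
  then have "min_odd_parts k m \<le> m"
    using n 2 unfolding K_def by linarith
  moreover have "m \<le> K*(j+1)"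
    using 2 unfolding K_def by simp
  then have "m \<le> K * min_odd_parts k m"
    using n mult_le_mono2[of "j+1" "min_odd_parts k m" K] by linarith
  moreover have "min_odd_parts k m + m = 2*((k+1)*j + 1) + (w + w mod 2)"
    using n 2 by (simp add: algebra_simps)
  moreover have "even (w + w mod 2)"
    by (cases "even w") auto
  ultimately show ?thesis
    unfolding K_def by simp
qed

lemma min_odd_parts_le:
  assumes "m \<le> (2*k+1)*n" "even (n+m)"
  shows "min_odd_parts k m \<le> n"
proof (cases m rule: odd_block_cases[where k = k])
  case 1
  then show ?thesis by (simp add: min_odd_parts_def)
next
  case (2 j w)
  define K where "K = 2*k+1"
  have "K*j < K*n"
    using assms(1) 2 unfolding K_def by linarith
  then have "j < n"
    using mult_less_cancel1 by blast
  moreover have "n \<noteq> j + 1" if "odd w"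
  proof
    assume "n = j + 1"
    then have "even (2*(j+1+k*j) + w)"
      using assms(2) 2 by (simp add: algebra_simps)
    with \<open>odd w\<close> show False by simp
  qed
  ultimately show ?thesis
    using 2 min_odd_parts_block[of w k j] by (cases "even w") auto
qed

lemma min_odd_parts_le_Suc:
  assumes "m \<le> (2*k+1)*n"
  shows "min_odd_parts k m \<le> n + 1"
proof (cases m rule: odd_block_cases[where k = k])
  case 1
  then show ?thesis by (simp add: min_odd_parts_def)
next
  case (2 j w)
  define K where "K = 2*k+1"
  have "K*j < K*n"
    using assms 2 unfolding K_def by linarith
  then have "j < n"
    using mult_less_cancel1 by blast
  then show ?thesis
    using 2 min_odd_parts_block[of w k j] by (cases "even w") auto
qed

lemma mod_add_dvd_left:
  fixes a x y :: nat
  shows "a dvd x \<Longrightarrow> (x + y) mod a = y mod a"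
  by (auto elim!: dvdE)

lemma Nr_odd_progression:
  fixes a c d k m :: nat
  assumes "coprime a d" "a dvd c" "c \<le> a*d" "m < a"
  shows "Nr a (map (\<lambda>i. c + (2*i+1)*d) [0..<k+1]) (d*m mod a) = min_odd_parts k m * c + d*m"
  unfolding Nr_def
proof (rule Least_equality)
  have "(min_odd_parts k m * c + d*m) mod a = d*m mod a"
    using assms(2) by (simp add: mod_add_dvd_left)
  moreover have "representable (map (\<lambda>i. c + (2*i+1)*d) [0..<k+1]) (min_odd_parts k m * c + d*m)"
    unfolding representable_odd_progression_iff using min_odd_parts_admissible by blast
  ultimately show "(min_odd_parts k m * c + d*m) mod a = d*m mod a \<and>
      representable (map (\<lambda>i. c + (2*i+1)*d) [0..<k+1]) (min_odd_parts k m * c + d*m)"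
    by blast
next
  fix N
  assume N: "N mod a = d*m mod a \<and> representable (map (\<lambda>i. c + (2*i+1)*d) [0..<k+1]) N"
  then obtain n m' where N_eq: "N = n*c + d*m'"
    and adm: "m' \<le> (2*k+1)*n" "even (n+m')"
    unfolding representable_odd_progression_iff by blast
  have "[d*m' = d*m] (mod a)"
    using N assms(2) unfolding N_eq cong_def by (simp add: mod_add_dvd_left)
  then have "[m' = m] (mod a)"
    using assms(1) cong_mult_lcancel_nat[of d a m' m] by (simp add: coprime_commute)
  then have "m' mod a = m"
    using assms(4) by (simp add: cong_def)
  then have "m' = a * (m' div a) + m"
    by (metis mult_div_mod_eq)
  then consider "m' = m" | "m + a \<le> m'"
    by (cases "m' div a") auto
  then show "min_odd_parts k m * c + d*m \<le> N"
  proof cases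
    case 1
    then have "min_odd_parts k m \<le> n"
      using adm min_odd_parts_le by blast
    then show ?thesis
      unfolding N_eq 1 by simp
  next
    case 2
    then have "min_odd_parts k m \<le> n + 1"
      using adm(1) min_odd_parts_le_Suc[of m k n] by linarith
    then have "min_odd_parts k m * c \<le> (n+1) * c"
      by (rule mult_le_mono1)
    then have "min_odd_parts k m * c \<le> n*c + a*d"
      using assms(3) by simp
    moreover have "d*m + a*d \<le> d*m'"
      using 2 mult_le_mono2[of "m+a" m' d] by (simp add: algebra_simps)
    ultimately show ?thesis
      unfolding N_eq by linarith
  qed
qed

lemma bij_betw_mult_mod:
  fixes a d :: nat
  assumes "coprime a d"
  shows "bij_betw (\<lambda>m. d*m mod a) {..<a} {..<a}"
proof -
  have "inj_on (\<lambda>m. d*m mod a) {..<a}"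
  proof (rule inj_onI)
    fix m m' assume "m \<in> {..<a}" "m' \<in> {..<a}" "d*m mod a = d*m' mod a"
    then show "m = m'"
      using cong_mult_lcancel_nat[of d a m m'] assms by (simp add: cong_def coprime_commute)
  qed
  moreover have "(\<lambda>m. d*m mod a) ` {..<a} \<subseteq> {..<a}"
    by auto
  ultimately show ?thesis
    by (simp add: bij_betw_def endo_inj_surj)
qed

lemma sum_Nr_odd_progression:
  fixes f :: "nat \<Rightarrow> 'b::comm_monoid_add"
  assumes "coprime a d" "a dvd c" "c \<le> a*d"
  shows "(\<Sum>r<a. f (Nr a (map (\<lambda>i. c + (2*i+1)*d) [0..<k+1]) r))
    = (\<Sum>m<a. f (min_odd_parts k m * c + d*m))"
proof -
  let ?C = "map (\<lambda>i. c + (2*i+1)*d) [0..<k+1]"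
  have "(\<Sum>r<a. f (Nr a ?C r)) = (\<Sum>m<a. f (Nr a ?C (d*m mod a)))"
    by (rule sum.reindex_bij_betw[OF bij_betw_mult_mod[OF assms(1)], symmetric])
  also have "\<dots> = (\<Sum>m<a. f (min_odd_parts k m * c + d*m))"
    using Nr_odd_progression[OF assms] by simp
  finally show ?thesis .
qed

lemma sum_lessThan_add:
  "(\<Sum>m<p+q. f m) = (\<Sum>m<p. f m) + (\<Sum>w<q. f (p+w))" for p q :: nat
  by (induction q) (simp_all add: add.assoc)

lemma sum_lessThan_mult:
  "(\<Sum>m<K*s. f m) = (\<Sum>j<s. \<Sum>w<K. f (K*j + w))" for K s :: nat
proof (induction s)
  case (Suc s)
  have "K * Suc s = K*s + K"
    by simp
  then show ?case
    using Suc by (simp only: sum_lessThan_add) simp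
qed simp

lemma sum_lessThan_parity_split:
  "(\<Sum>w<n. f w) = (\<Sum>i<(n+1) div 2. f (2*i)) + (\<Sum>i<n div 2. f (2*i+1))" for n :: nat
proof -
  have even_case: "(\<Sum>w<2*p. f w) = (\<Sum>i<p. f (2*i)) + (\<Sum>i<p. f (2*i+1))" for p
    by (induction p) (simp_all add: algebra_simps)
  show ?thesis
  proof (cases "even n")
    case True
    then obtain p where "n = 2*p"
      by (rule evenE)
    then show ?thesis
      using even_case[of p] by simp
  next
    case False
    then obtain p where "n = 2*p+1"
      by (rule oddE)
    then show ?thesis
      using even_case[of p] by (simp add: algebra_simps)
  qed
qed

lemma sum_power_block:
  fixes x :: "'a::comm_semiring_1"
  assumes "n \<le> 2*k+1"
  shows "(\<Sum>w<n. x ^ (min_odd_parts k (Suc ((2*k+1)*j + w)) * c + d * Suc ((2*k+1)*j + w)))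
    = x^(c+d) * (x^(c+(2*k+1)*d))^j
      * ((\<Sum>i<(n+1) div 2. (x^(2*d))^i) + x^(c+d) * (\<Sum>i<n div 2. (x^(2*d))^i))"
proof -
  define e where "e w = min_odd_parts k (Suc ((2*k+1)*j + w)) * c + d * Suc ((2*k+1)*j + w)" for w
  define B where "B = x^(c+d) * (x^(c+(2*k+1)*d))^j"
  have even_term: "x ^ e (2*i) = B * (x^(2*d))^i" if "i < (n+1) div 2" for i
  proof -
    have "min_odd_parts k (Suc ((2*k+1)*j + 2*i)) = j + 1"
      using that assms min_odd_parts_block[of "2*i" k j] by simp
    then have "e (2*i) = (c+d) + (c+(2*k+1)*d)*j + 2*d*i"
      unfolding e_def by (simp add: algebra_simps)
    then show ?thesis
      unfolding B_def by (simp only: power_add power_mult)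
  qed
  have odd_term: "x ^ e (2*i+1) = B * x^(c+d) * (x^(2*d))^i" if "i < n div 2" for i
  proof -
    have "min_odd_parts k (Suc ((2*k+1)*j + (2*i+1))) = j + 2"
      using that assms min_odd_parts_block[of "2*i+1" k j] by simp
    then have "e (2*i+1) = (c+d) + (c+(2*k+1)*d)*j + (c+d) + 2*d*i"
      unfolding e_def by (simp add: algebra_simps)
    then show ?thesis
      unfolding B_def by (simp only: power_add power_mult)
  qed
  have "(\<Sum>w<n. x ^ e w) = (\<Sum>i<(n+1) div 2. x ^ e (2*i)) + (\<Sum>i<n div 2. x ^ e (2*i+1))"
    by (rule sum_lessThan_parity_split)
  also have "\<dots> = (\<Sum>i<(n+1) div 2. B * (x^(2*d))^i) + (\<Sum>i<n div 2. B * x^(c+d) * (x^(2*d))^i)"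
    using even_term odd_term by simp
  finally show ?thesis
    unfolding e_def B_def by (simp add: sum_distrib_left algebra_simps)
qed

lemma sum_power_min_odd_parts:
  fixes x :: "'a::comm_semiring_1" and c d k s t :: nat
  assumes "t \<le> 2*k+1"
  defines "y \<equiv> x^(c+(2*k+1)*d)" and "z \<equiv> x^(2*d)"
  shows "(\<Sum>m<Suc ((2*k+1)*s + t). x ^ (min_odd_parts k m * c + d*m))
    = 1 + x^(c+d) * (\<Sum>j<s. y^j) * ((\<Sum>i<k+1. z^i) + x^(c+d) * (\<Sum>i<k. z^i))
        + x^(c+d) * y^s * ((\<Sum>i<(t+1) div 2. z^i) + x^(c+d) * (\<Sum>i<t div 2. z^i))"
proof -
  define K where "K = 2*k+1"
  define F where "F m = x ^ (min_odd_parts k m * c + d*m)" for m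
  have block: "(\<Sum>w<n. F (Suc (K*j + w)))
      = x^(c+d) * y^j * ((\<Sum>i<(n+1) div 2. z^i) + x^(c+d) * (\<Sum>i<n div 2. z^i))"
    if "n \<le> K" for n j
    using sum_power_block[of n k x j c d] that unfolding F_def K_def y_def z_def by simp
  have "(\<Sum>m<Suc (K*s + t). F m) = F 0 + (\<Sum>m<K*s + t. F (Suc m))"
    by (rule sum.lessThan_Suc_shift)
  also have "F 0 = 1"
    unfolding F_def min_odd_parts_def by simp
  also have "(\<Sum>m<K*s + t. F (Suc m))
      = (\<Sum>j<s. \<Sum>w<K. F (Suc (K*j + w))) + (\<Sum>w<t. F (Suc (K*s + w)))"
    by (simp only: sum_lessThan_add sum_lessThan_mult)
  also have "(\<Sum>j<s. \<Sum>w<K. F (Suc (K*j + w)))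
      = (\<Sum>j<s. x^(c+d) * y^j * ((\<Sum>i<k+1. z^i) + x^(c+d) * (\<Sum>i<k. z^i)))"
    using block[of K] unfolding K_def by simp
  also have "(\<Sum>w<t. F (Suc (K*s + w)))
      = x^(c+d) * y^s * ((\<Sum>i<(t+1) div 2. z^i) + x^(c+d) * (\<Sum>i<t div 2. z^i))"
    using block assms(1) unfolding K_def by simp
  finally show ?thesis
    unfolding F_def K_def by (simp only: sum_distrib_left sum_distrib_right add.assoc)
qed

lemma block_sums_closed_form:
  fixes x :: "'a::field" and c d k s t :: nat
  assumes "1 - x^(2*d) \<noteq> 0" "1 - x^(c+(2*k+1)*d) \<noteq> 0"
  defines "y \<equiv> x^(c+(2*k+1)*d)" and "z \<equiv> x^(2*d)"
  shows "x^(c+d) * (\<Sum>j<s. y^j) * ((\<Sum>i<k+1. z^i) + x^(c+d) * (\<Sum>i<k. z^i))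
        + x^(c+d) * y^s * ((\<Sum>i<(t+1) div 2. z^i) + x^(c+d) * (\<Sum>i<t div 2. z^i))
     = x^(c+d) * (1 - x^((c+(2*k+1)*d)*s)) * (1 - x^(2*d*(k+1)))
             / ((1 - x^(c+(2*k+1)*d)) * (1 - x^(2*d)))
         + x^(2*c+2*d) * (1 - x^((c+(2*k+1)*d)*s)) * (1 - x^(2*d*k))
             / ((1 - x^(c+(2*k+1)*d)) * (1 - x^(2*d)))
         + (if odd t then
              x^(c*(s+1) + d*((2*k+1)*s+1)) * (1 - x^(d*(t+1))) / (1 - x^(2*d))
            + x^(c*(s+2) + d*((2*k+1)*s+2)) * (1 - x^(d*(t-1))) / (1 - x^(2*d))
            else
              x^(c*(s+1) + d*((2*k+1)*s+1)) * (1 - x^(d*t)) / (1 - x^(2*d))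
            + x^(c*(s+2) + d*((2*k+1)*s+2)) * (1 - x^(d*t)) / (1 - x^(2*d)))"
proof -
  have geom_y: "(\<Sum>j<s. y^j) = (1 - y^s) / (1 - y)"
    and geom_z: "(\<Sum>i<n. z^i) = (1 - z^n) / (1 - z)" for n
    using assms(1,2) unfolding y_def z_def by (simp_all add: sum_gp_strict)
  have pow_y: "x^((c+(2*k+1)*d)*s) = y^s"
    unfolding y_def by (rule power_mult)
  have pow_z: "x^(2*d*n) = z^n" for n
    unfolding z_def by (rule power_mult)
  have "c*(s+1) + d*((2*k+1)*s+1) = (c+d) + (c+(2*k+1)*d)*s"
    by (simp add: algebra_simps)
  then have pow_1: "x^(c*(s+1) + d*((2*k+1)*s+1)) = x^(c+d) * y^s"
    unfolding y_def by (simp only: power_add power_mult)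
  have "c*(s+2) + d*((2*k+1)*s+2) = (c+d) + (c+d) + (c+(2*k+1)*d)*s"
    by (simp add: algebra_simps)
  then have pow_2: "x^(c*(s+2) + d*((2*k+1)*s+2)) = x^(c+d) * x^(c+d) * y^s"
    unfolding y_def by (simp only: power_add power_mult)
  have "2*c+2*d = (c+d) + (c+d)"
    by simp
  then have pow_3: "x^(2*c+2*d) = x^(c+d) * x^(c+d)"
    by (simp only: power_add)
  note closed_forms = geom_y geom_z pow_y pow_1 pow_2 pow_3
  show ?thesis
  proof (cases "odd t")
    case True
    then have exps: "d*(t+1) = 2*d*((t+1) div 2)" "d*(t-1) = 2*d*(t div 2)"
      by (auto elim!: oddE)
    show ?thesis
      using True unfolding closed_forms exps pow_z z_def[symmetric] y_def[symmetric]
      by (simp add: add_divide_distrib distrib_left mult_ac add.assoc)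
  next
    case False
    then have exps: "d*t = 2*d*(t div 2)" "(t+1) div 2 = t div 2"
      by (auto elim!: evenE)
    show ?thesis
      using False unfolding closed_forms exps pow_z z_def[symmetric] y_def[symmetric]
      by (simp add: add_divide_distrib distrib_left mult_ac add.assoc)
  qed
qed

theorem mainTheorem15:
  fixes a h d k s t :: nat and x :: complex
  assumes "a > 0" "h > 0" "d > 0" "k > 0" "a > 2" "d > h" "gcd a d = 1"
    and "1 \<le> 2*k+1" "2*k+1 \<le> a - 1"
    and "a - 1 = (2*k+1)*s + t" "1 \<le> t" "t \<le> 2*k+1"
    and "1 - x^(2*d) \<noteq> 0" "1 - x^(h*a+(2*k+1)*d) \<noteq> 0"
  shows "(\<Sum>r=0..a-1. x ^ Nr a (map (\<lambda>i. h*a + (2*i+1)*d) [0..<k+1]) r)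
     = 1 + x^(h*a+d) * (1 - x^((h*a+(2*k+1)*d)*s)) * (1 - x^(2*d*(k+1)))
             / ((1 - x^(h*a+(2*k+1)*d)) * (1 - x^(2*d)))
         + x^(2*h*a+2*d) * (1 - x^((h*a+(2*k+1)*d)*s)) * (1 - x^(2*d*k))
             / ((1 - x^(h*a+(2*k+1)*d)) * (1 - x^(2*d)))
         + (if odd t then
              x^(h*a*(s+1) + d*((2*k+1)*s+1)) * (1 - x^(d*(t+1))) / (1 - x^(2*d))
            + x^(h*a*(s+2) + d*((2*k+1)*s+2)) * (1 - x^(d*(t-1))) / (1 - x^(2*d))
            else
              x^(h*a*(s+1) + d*((2*k+1)*s+1)) * (1 - x^(d*t)) / (1 - x^(2*d))
            + x^(h*a*(s+2) + d*((2*k+1)*s+2)) * (1 - x^(d*t)) / (1 - x^(2*d)))"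
proof -
  define y z where "y = x^(h*a+(2*k+1)*d)" and "z = x^(2*d)"
  have blocks: "{..<a} = {..<Suc ((2*k+1)*s + t)}"
    using assms(1,10) by simp
  have "{0..a-1} = {..<a}" "coprime a d" "h*a \<le> a*d"
    using assms(1,6,7) by (auto simp: coprime_iff_gcd_eq_1)
  then have "(\<Sum>r=0..a-1. x ^ Nr a (map (\<lambda>i. h*a + (2*i+1)*d) [0..<k+1]) r)
      = (\<Sum>m<a. x ^ (min_odd_parts k m * (h*a) + d*m))"
    using sum_Nr_odd_progression[of a d "h*a" "\<lambda>n. x^n" k] by simp
  also have "\<dots> = 1 + (x^(h*a+d) * (\<Sum>j<s. y^j) * ((\<Sum>i<k+1. z^i) + x^(h*a+d) * (\<Sum>i<k. z^i))
        + x^(h*a+d) * y^s * ((\<Sum>i<(t+1) div 2. z^i) + x^(h*a+d) * (\<Sum>i<t div 2. z^i)))"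
    using blocks unfolding y_def z_def by (simp only: sum_power_min_odd_parts[OF assms(12)] add.assoc)
  finally show ?thesis
    using block_sums_closed_form[OF assms(13,14), of s t] mult.assoc[of 2 h a]
    unfolding y_def z_def by (simp only: add.assoc)
qed

end
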